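(* Let $n\geqslant 2$ and let $\alpha,\beta\in\mathcal{AM}_n$ be two elements of rank $n-1$. Then: (1) if $n\equiv 0$ or $n\equiv 3\pmod 4$, then $\alpha\mathscr{J}\beta$ in $\mathcal{AM}_n$; (2) if $n\equiv 1$ or $n\equiv 2\pmod 4$, then $\alpha\mathscr{J}\beta$ in $\mathcal{AM}_n$ if and only if $\mathrm{d}(\alpha)$ and $\mathrm{d}(\beta)$ have the same parity.
   Context: Let $\Omega_n=\{1<2<\cdots<n\}$ and $\mathcal{I}_n$ the monoid of all partial injective maps of $\Omega_n$, composed left to right; the rank of $\alpha$ is $|\mathrm{Im}(\alpha)|$. $\mathcal{AI}_n$ is the set of all $\alpha\in\mathcal{I}_n$ with $\alpha=\sigma|_{\mathrm{Dom}(\alpha)}$ for some even permutation $\sigma$ of $\Omega_n$. $\mathcal{PMI}_n$ is the set of monotone (order-preserving or order-reversing) elements of $\mathcal{I}_n$ and $\mathcal{AM}_n=\mathcal{AI}_n\cap\mathcal{PMI}_n$, a monoid. For $\alpha$ of rank $n-1$, $\mathrm{d}(\alpha)$ is the unique element of $\Omega_n\setminus\mathrm{Dom}(\alpha)$. $\mathscr{J}$ is Green's relation: $a\mathscr{J}b$ iff $MaM=MbM$. *)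

theory Defs
  imports "HOL-Combinatorics.Permutations"
begin

definition Omega :: "nat \<Rightarrow> nat set" where
  "Omega n = {1..n}"

definition PI :: "nat \<Rightarrow> (nat \<Rightarrow> nat option) set" where
  "PI n = {f. dom f \<subseteq> Omega n \<and> ran f \<subseteq> Omega n \<and> inj_on f (dom f)}"

text \<open>Composition, left to right: first a then b.\<close>
definition pcomp :: "(nat \<Rightarrow> nat option) \<Rightarrow> (nat \<Rightarrow> nat option) \<Rightarrow> (nat \<Rightarrow> nat option)" where
  "pcomp a b = b \<circ>\<^sub>m a"

definition rank :: "(nat \<Rightarrow> nat option) \<Rightarrow> nat" where
  "rank f = card (ran f)"

definition AI :: "nat \<Rightarrow> (nat \<Rightarrow> nat option) set" where
  "AI n = {f \<in> PI n. \<exists>\<sigma>. \<sigma> permutes Omega n \<and> evenperm \<sigma> \<and>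
                         (\<forall>x \<in> dom f. f x = Some (\<sigma> x))}"

definition order_preserving_p :: "(nat \<Rightarrow> nat option) \<Rightarrow> bool" where
  "order_preserving_p f = (\<forall>x \<in> dom f. \<forall>y \<in> dom f. x \<le> y \<longrightarrow> the (f x) \<le> the (f y))"

definition order_reversing_p :: "(nat \<Rightarrow> nat option) \<Rightarrow> bool" where
  "order_reversing_p f = (\<forall>x \<in> dom f. \<forall>y \<in> dom f. x \<le> y \<longrightarrow> the (f y) \<le> the (f x))"

definition PMI :: "nat \<Rightarrow> (nat \<Rightarrow> nat option) set" where
  "PMI n = {f \<in> PI n. order_preserving_p f \<or> order_reversing_p f}"

definition AM :: "nat \<Rightarrow> (nat \<Rightarrow> nat option) set" where
  "AM n = AI n \<inter> PMI n"

definition ideal2 :: "(nat \<Rightarrow> nat option) set \<Rightarrow> (nat \<Rightarrow> nat option) \<Rightarrow> (nat \<Rightarrow> nat option) set" where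
  "ideal2 M a = {pcomp (pcomp s a) t | s t. s \<in> M \<and> t \<in> M}"

definition greenJ :: "(nat \<Rightarrow> nat option) set \<Rightarrow> (nat \<Rightarrow> nat option) \<Rightarrow> (nat \<Rightarrow> nat option) \<Rightarrow> bool" where
  "greenJ M a b \<longleftrightarrow> ideal2 M a = ideal2 M b"

text \<open>For f of rank n-1, the unique point of Omega_n not in the domain.\<close>
definition dpt :: "nat \<Rightarrow> (nat \<Rightarrow> nat option) \<Rightarrow> nat" where
  "dpt n f = (THE x. x \<in> Omega n - dom f)"

end

(*
  Every element of AM n is the restriction s|A of an even permutation s of {1..n} that is
  monotone on A, and s|A is J-related to the partial identities on A and on s(A). Hence two
  elements of rank n-1 with missing points a and b are J-related iff some even permutation,
  monotone off a, sends a to b. An increasing such permutation is the shift cycle taking a to b,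
  of sign (-1)^(a+b); a decreasing one is the reversal x |-> n+1-x composed with the shift cycle
  taking a to n+1-b, of sign (-1)^(n div 2 + a + b + n + 1). For n = 0, 3 (mod 4) one of the two
  is always even; for n = 1, 2 (mod 4) both are even exactly when a + b is.
*)

theory Submission
  imports Defs
begin

section \<open>Shift cycles and the reversal of {1..n}\<close>

text \<open>Sends i to j and moves each point between i (exclusive) and j (inclusive) one step
  towards i, so that it is increasing away from i.\<close>

definition shift_cycle :: "nat \<Rightarrow> nat \<Rightarrow> nat \<Rightarrow> nat" where
  "shift_cycle i j x = (if x = i then j else if i < j \<and> i < x \<and> x \<le> j then x - 1
     else if j < i \<and> j \<le> x \<and> x < i then x + 1 else x)"

lemma shift_cycle_same [simp]: "shift_cycle i j i = j"
  by (simp add: shift_cycle_def)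

lemma shift_cycle_add_permutes_evenperm:
  "shift_cycle i (i + k) permutes {i..i + k} \<and> (evenperm (shift_cycle i (i + k)) \<longleftrightarrow> even k)"
proof (induction k)
  case 0
  have "shift_cycle i i = id" by (auto simp: shift_cycle_def)
  then show ?case by (simp add: permutes_id id_def)
next
  case (Suc k)
  let ?c = "shift_cycle i (i + k)" and ?t = "transpose (i + k) (i + k + 1)"
  have step: "shift_cycle i (i + Suc k) = ?t \<circ> ?c"
    by (auto simp: shift_cycle_def fun_eq_iff transpose_def)
  have c: "?c permutes {i..i + Suc k}"
    by (rule permutes_subset[OF conjunct1[OF Suc.IH]]) auto
  have t: "?t permutes {i..i + Suc k}"
    by (rule permutes_swap_id) auto
  have "evenperm (?t \<circ> ?c) \<longleftrightarrow> (evenperm ?t \<longleftrightarrow> evenperm ?c)"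
    using c by (intro evenperm_comp permutation_swap_id permutes_imp_permutation) auto
  then have "evenperm (?t \<circ> ?c) \<longleftrightarrow> even (Suc k)"
    using Suc.IH by (simp add: evenperm_swap)
  then show ?case
    unfolding step using permutes_compose[OF c t] by blast
qed

lemma shift_cycle_inverse: "shift_cycle j i \<circ> shift_cycle i j = id"
  by (auto simp: shift_cycle_def fun_eq_iff)

lemma inv_shift_cycle: "inv (shift_cycle i j) = shift_cycle j i"
  by (intro inv_unique_comp shift_cycle_inverse)

lemma shift_cycle_permutes:
  assumes "i \<in> {1..n}" "j \<in> {1..n}"
  shows "shift_cycle i j permutes {1..n}"
proof -
  have upwards: "shift_cycle i j permutes {1..n}" if "i \<le> j" "i \<in> {1..n}" "j \<in> {1..n}" for i j
  proof -
    obtain k where "j = i + k" using le_Suc_ex \<open>i \<le> j\<close> by blast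
    then show ?thesis
      using permutes_subset[OF shift_cycle_add_permutes_evenperm[of i k, THEN conjunct1]] that by simp
  qed
  show ?thesis
  proof (cases "i \<le> j")
    case True
    with upwards assms show ?thesis by blast
  next
    case False
    then have "inv (shift_cycle j i) permutes {1..n}"
      using upwards assms by (intro permutes_inv) simp
    then show ?thesis by (simp add: inv_shift_cycle)
  qed
qed

lemma evenperm_shift_cycle: "evenperm (shift_cycle i j) \<longleftrightarrow> even (i + j)"
proof (cases "i \<le> j")
  case True
  then obtain k where "j = i + k" using le_Suc_ex by blast
  with shift_cycle_add_permutes_evenperm[of i k] show ?thesis by presburger
next
  case False
  then obtain k where k: "i = j + k" using le_Suc_ex[of j i] by auto
  have "permutation (shift_cycle j i)"
    using k permutes_imp_permutation[OF _ shift_cycle_add_permutes_evenperm[of j k, THEN conjunct1]] by simp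
  then have "evenperm (shift_cycle i j) \<longleftrightarrow> evenperm (shift_cycle j i)"
    by (metis evenperm_inv inv_shift_cycle)
  with shift_cycle_add_permutes_evenperm[of j k] k show ?thesis by presburger
qed

lemma strict_mono_on_shift_cycle: "strict_mono_on (A - {i}) (shift_cycle i j)"
proof (rule strict_mono_onI)
  fix x y assume "x \<in> A - {i}" "y \<in> A - {i}" "x < y"
  then show "shift_cycle i j x < shift_cycle i j y"
    by (auto simp: shift_cycle_def)
qed

definition reversal :: "nat \<Rightarrow> nat \<Rightarrow> nat" where
  "reversal n x = (if x \<in> {1..n} then Suc n - x else x)"

lemma reversal_reversal [simp]: "reversal n (reversal n x) = x"
  by (auto simp: reversal_def)

lemma strict_antimono_on_reversal: "strict_antimono_on {1..n} (reversal n)"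
proof (rule monotone_onI)
  fix x y assume "x \<in> {1..n}" "y \<in> {1..n}" "x < y"
  then show "reversal n y < reversal n x"
    by (simp add: reversal_def)
qed

lemma reversal_permutes_evenperm:
  "reversal n permutes {1..n} \<and> (evenperm (reversal n) \<longleftrightarrow> even (n div 2))"
proof (induction n)
  case 0
  have "reversal 0 = id" by (auto simp: reversal_def)
  then show ?case by (simp add: permutes_id id_def)
next
  case (Suc n)
  let ?c = "shift_cycle (Suc n) 1"
  have step: "reversal (Suc n) = ?c \<circ> reversal n"
    by (auto simp: shift_cycle_def reversal_def fun_eq_iff)
  have r: "reversal n permutes {1..Suc n}"
    by (rule permutes_subset[OF conjunct1[OF Suc.IH]]) auto
  have c: "?c permutes {1..Suc n}"
    by (rule shift_cycle_permutes) auto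
  have "evenperm (?c \<circ> reversal n) \<longleftrightarrow> (evenperm ?c \<longleftrightarrow> evenperm (reversal n))"
    using r c by (intro evenperm_comp permutes_imp_permutation) auto
  also have "\<dots> \<longleftrightarrow> even (Suc n div 2)"
    using Suc.IH by (simp add: evenperm_shift_cycle) presburger
  finally show ?case
    unfolding step using permutes_compose[OF r c] by blast
qed

lemmas reversal_permutes = reversal_permutes_evenperm[THEN conjunct1]
lemmas evenperm_reversal = reversal_permutes_evenperm[THEN conjunct2]

section \<open>Monotonic maps\<close>

definition monotonic_on :: "'a::ord set \<Rightarrow> ('a \<Rightarrow> 'b::ord) \<Rightarrow> bool" where
  "monotonic_on A f \<longleftrightarrow> mono_on A f \<or> antimono_on A f"

lemma monotonic_on_subset: "monotonic_on A f \<Longrightarrow> B \<subseteq> A \<Longrightarrow> monotonic_on B f"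
  unfolding monotonic_on_def by (meson monotone_on_subset)

lemma monotonic_on_comp:
  fixes f :: "'a::order \<Rightarrow> 'b::order" and g :: "'b \<Rightarrow> 'c::order"
  assumes f: "monotonic_on A f" and g: "monotonic_on (f ` A) g"
  shows "monotonic_on A (g \<circ> f)"
proof -
  have g_mono: "g (f x) \<le> g (f y)"
    if "mono_on (f ` A) g" "x \<in> A" "y \<in> A" "f x \<le> f y" for x y
    using monotone_onD[OF that(1) imageI[OF that(2)] imageI[OF that(3)] that(4)] .
  have g_anti: "g (f y) \<le> g (f x)"
    if "antimono_on (f ` A) g" "x \<in> A" "y \<in> A" "f x \<le> f y" for x y
    using monotone_onD[OF that(1) imageI[OF that(2)] imageI[OF that(3)] that(4)] .
  from f g show ?thesis
    unfolding monotonic_on_def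
  proof (elim disjE)
    assume "mono_on A f" "mono_on (f ` A) g"
    then have "mono_on A (g \<circ> f)"
      by (intro monotone_onI) (auto intro: g_mono dest: monotone_onD)
    then show "mono_on A (g \<circ> f) \<or> antimono_on A (g \<circ> f)" ..
  next
    assume "mono_on A f" "antimono_on (f ` A) g"
    then have "antimono_on A (g \<circ> f)"
      by (intro monotone_onI) (auto intro: g_anti dest: monotone_onD)
    then show "mono_on A (g \<circ> f) \<or> antimono_on A (g \<circ> f)" ..
  next
    assume "antimono_on A f" "mono_on (f ` A) g"
    then have "antimono_on A (g \<circ> f)"
      by (intro monotone_onI) (auto intro: g_mono dest: monotone_onD)
    then show "mono_on A (g \<circ> f) \<or> antimono_on A (g \<circ> f)" ..
  next
    assume "antimono_on A f" "antimono_on (f ` A) g"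
    then have "mono_on A (g \<circ> f)"
      by (intro monotone_onI) (auto intro: g_anti dest: monotone_onD)
    then show "mono_on A (g \<circ> f) \<or> antimono_on A (g \<circ> f)" ..
  qed
qed

lemma monotonic_on_inv:
  fixes f :: "'a::linorder \<Rightarrow> 'b::order"
  assumes inj: "inj f" and mono: "monotonic_on A f"
  shows "monotonic_on (f ` A) (inv f)"
proof -
  have inj_on: "inj_on f A" using inj by (rule inj_on_subset) simp
  from mono show ?thesis
    unfolding monotonic_on_def
  proof
    assume "mono_on A f"
    then have strict: "strict_mono_on A f" using inj_on by (rule mono_imp_strict_mono)
    have "mono_on (f ` A) (inv f)"
      by (auto intro!: monotone_onI simp: strict_mono_on_less_eq[OF strict] inv_f_f[OF inj])
    then show "mono_on (f ` A) (inv f) \<or> antimono_on (f ` A) (inv f)" ..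
  next
    assume "antimono_on A f"
    then have strict: "strict_antimono_on A f" using inj_on by (rule antimono_imp_strict_antimono)
    have "antimono_on (f ` A) (inv f)"
    proof (rule monotone_onI)
      fix u v assume "u \<in> f ` A" "v \<in> f ` A" "u \<le> v"
      then obtain x y where xy: "x \<in> A" "y \<in> A" "u = f x" "v = f y" "f x \<le> f y" by blast
      have "y \<le> x"
      proof (rule ccontr)
        assume "\<not> y \<le> x"
        then have "f y < f x" using monotone_onD[OF strict] xy(1,2) by simp
        then show False using xy(5) by simp
      qed
      then show "inv f v \<le> inv f u" using xy(3,4) inv_f_f[OF inj] by simp
    qed
    then show "mono_on (f ` A) (inv f) \<or> antimono_on (f ` A) (inv f)" ..
  qed
qed

lemma strict_mono_on_eq_if_image_eq:
  fixes f g :: "'a::wellorder \<Rightarrow> 'b::linorder"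
  assumes "strict_mono_on A f" "strict_mono_on A g" "f ` A = g ` A" "x \<in> A"
  shows "f x = g x"
proof -
  have le: "f x \<le> g x"
    if f: "strict_mono_on A f" and g: "strict_mono_on A g" and img: "g ` A \<subseteq> f ` A" and "x \<in> A"
    for f g :: "'a \<Rightarrow> 'b" and x
    using \<open>x \<in> A\<close>
  proof (induction x rule: less_induct)
    case (less x)
    show ?case
    proof (rule ccontr)
      assume "\<not> f x \<le> g x"
      obtain y where y: "y \<in> A" "g x = f y" using img less.prems by blast
      have "y < x"
        using \<open>\<not> f x \<le> g x\<close> y strict_mono_on_leD[OF f less.prems, of y] by force
      then have "g y < f y"
        using y strict_mono_onD[OF g y(1) less.prems] by simp
      moreover have "f y \<le> g y" using less.IH \<open>y < x\<close> y(1) by blast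
      ultimately show False by simp
    qed
  qed
  show ?thesis
    using le[OF assms(1,2)] le[OF assms(2,1)] assms(3,4) by (simp add: order.antisym)
qed

section \<open>Permutations monotone off one point\<close>

lemma permutes_image_Diff_singleton: "p permutes S \<Longrightarrow> p ` (S - {i}) = S - {p i}"
  by (simp add: image_set_diff permutes_inj permutes_image)

lemma permutes_strict_mono_on_Diff_eq_shift_cycle:
  assumes s: "s permutes {1..n}" and i: "i \<in> {1..n}" and mono: "strict_mono_on ({1..n} - {i}) s"
  shows "s = shift_cycle i (s i)"
proof
  fix x
  have c: "shift_cycle i (s i) permutes {1..n}"
    using i permutes_in_image[OF s] by (intro shift_cycle_permutes) auto
  consider "x \<in> {1..n} - {i}" | "x = i" | "x \<notin> {1..n}" by blast
  then show "s x = shift_cycle i (s i) x"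
  proof cases
    case 1
    note strict_mono_on_shift_cycle[of "{1..n}" i "s i"]
    moreover have "s ` ({1..n} - {i}) = shift_cycle i (s i) ` ({1..n} - {i})"
      using permutes_image_Diff_singleton[OF s] permutes_image_Diff_singleton[OF c] by simp
    ultimately show ?thesis using strict_mono_on_eq_if_image_eq mono 1 by metis
  qed (simp_all add: permutes_not_in[OF s] permutes_not_in[OF c])
qed

lemma reversal_comp_shift_cycle_permutes:
  "i \<in> {1..n} \<Longrightarrow> j \<in> {1..n} \<Longrightarrow> reversal n \<circ> shift_cycle i j permutes {1..n}"
  by (intro permutes_compose shift_cycle_permutes reversal_permutes)

lemma evenperm_reversal_comp_shift_cycle:
  assumes "i \<in> {1..n}" "j \<in> {1..n}"
  shows "evenperm (reversal n \<circ> shift_cycle i j) \<longleftrightarrow> (even (n div 2) \<longleftrightarrow> even (i + j))"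
proof -
  have "permutation (reversal n)" "permutation (shift_cycle i j)"
    using reversal_permutes shift_cycle_permutes[OF assms]
    by (auto intro: permutes_imp_permutation[OF finite_atLeastAtMost])
  then show ?thesis by (simp add: evenperm_comp evenperm_reversal evenperm_shift_cycle)
qed

lemma antimono_on_reversal_comp_shift_cycle:
  assumes "i \<in> {1..n}" "j \<in> {1..n}"
  shows "antimono_on ({1..n} - {i}) (reversal n \<circ> shift_cycle i j)"
proof (rule monotone_on_o)
  show "antimono_on {1..n} (reversal n)"
    using strict_antimono_on_reversal by (auto simp: monotone_on_def le_less)
  show "mono_on ({1..n} - {i}) (shift_cycle i j)"
    by (rule strict_mono_on_imp_mono_on[OF strict_mono_on_shift_cycle])
  show "shift_cycle i j ` ({1..n} - {i}) \<subseteq> {1..n}"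
    using permutes_image[OF shift_cycle_permutes[OF assms]] by blast
qed

lemma monotonic_on_shift_cycle: "monotonic_on (A - {i}) (shift_cycle i j)"
  unfolding monotonic_on_def using strict_mono_on_imp_mono_on[OF strict_mono_on_shift_cycle] ..

lemma monotonic_on_reversal_comp_shift_cycle:
  "i \<in> {1..n} \<Longrightarrow> j \<in> {1..n} \<Longrightarrow> monotonic_on ({1..n} - {i}) (reversal n \<circ> shift_cycle i j)"
  unfolding monotonic_on_def using antimono_on_reversal_comp_shift_cycle by blast

lemma permutes_monotonic_on_Diff_cases:
  assumes s: "s permutes {1..n}" and i: "i \<in> {1..n}" and mono: "monotonic_on ({1..n} - {i}) s"
  shows "s = shift_cycle i (s i) \<or> s = reversal n \<circ> shift_cycle i (n + 1 - s i)"
proof -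
  have inj: "inj_on s ({1..n} - {i})"
    using permutes_inj[OF s] by (rule inj_on_subset) simp
  show ?thesis
    using mono unfolding monotonic_on_def
  proof
    assume "mono_on ({1..n} - {i}) s"
    then have "strict_mono_on ({1..n} - {i}) s" using inj by (rule mono_imp_strict_mono)
    then show ?thesis using permutes_strict_mono_on_Diff_eq_shift_cycle[OF s i] by blast
  next
    assume "antimono_on ({1..n} - {i}) s"
    then have anti: "strict_antimono_on ({1..n} - {i}) s" using inj by (rule antimono_imp_strict_antimono)
    let ?t = "reversal n \<circ> s"
    have t: "?t permutes {1..n}" using permutes_compose[OF s reversal_permutes] .
    have "strict_mono_on ({1..n} - {i}) ?t"
    proof (rule strict_mono_onI)
      fix x y assume xy: "x \<in> {1..n} - {i}" "y \<in> {1..n} - {i}" "x < y"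
      then have "s y < s x" using monotone_onD[OF anti] by blast
      moreover have "s x \<in> {1..n}" "s y \<in> {1..n}" using xy permutes_in_image[OF s] by auto
      ultimately show "?t x < ?t y"
        using monotone_onD[OF strict_antimono_on_reversal] by fastforce
    qed
    then have "?t = shift_cycle i (?t i)"
      by (rule permutes_strict_mono_on_Diff_eq_shift_cycle[OF t i])
    moreover have "?t i = n + 1 - s i"
      using permutes_in_image[OF s] i by (simp add: reversal_def)
    ultimately have t_eq: "?t = shift_cycle i (n + 1 - s i)" by metis
    show ?thesis
      unfolding t_eq[symmetric] by (simp add: fun_eq_iff)
  qed
qed

definition even_monotonic_perm_maps :: "nat \<Rightarrow> nat \<Rightarrow> nat \<Rightarrow> bool" where
  "even_monotonic_perm_maps n i j \<longleftrightarrow>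
     (\<exists>s. s permutes {1..n} \<and> evenperm s \<and> s i = j \<and> monotonic_on ({1..n} - {i}) s)"

lemma even_monotonic_perm_maps_iff:
  assumes i: "i \<in> {1..n}" and j: "j \<in> {1..n}"
  shows "even_monotonic_perm_maps n i j \<longleftrightarrow>
    even (i + j) \<or> (even (n div 2) \<longleftrightarrow> even (i + j + n + 1))"
proof -
  have j': "n + 1 - j \<in> {1..n}" using j by auto
  have parity: "even (i + (n + 1 - j)) \<longleftrightarrow> even (i + j + n + 1)"
    using j by simp presburger
  have maps_i_to_j: "(reversal n \<circ> shift_cycle i (n + 1 - j)) i = j"
    using j by (auto simp: reversal_def)
  show ?thesis
  proof
    assume "even_monotonic_perm_maps n i j"
    then obtain s where s: "s permutes {1..n}" "evenperm s" "s i = j" "monotonic_on ({1..n} - {i}) s"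
      unfolding even_monotonic_perm_maps_def by blast
    from permutes_monotonic_on_Diff_cases[OF s(1) i s(4)]
    consider "s = shift_cycle i j" | "s = reversal n \<circ> shift_cycle i (n + 1 - j)"
      unfolding s(3) by blast
    then show "even (i + j) \<or> (even (n div 2) \<longleftrightarrow> even (i + j + n + 1))"
    proof cases
      case 1
      then show ?thesis using s(2) by (simp add: evenperm_shift_cycle)
    next
      case 2
      then show ?thesis using s(2) evenperm_reversal_comp_shift_cycle[OF i j'] parity by simp
    qed
  next
    assume "even (i + j) \<or> (even (n div 2) \<longleftrightarrow> even (i + j + n + 1))"
    then show "even_monotonic_perm_maps n i j"
    proof
      assume "even (i + j)"
      then show ?thesis
        unfolding even_monotonic_perm_maps_def using shift_cycle_permutes[OF i j] monotonic_on_shift_cycle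
        by (intro exI[of _ "shift_cycle i j"]) (simp add: evenperm_shift_cycle)
    next
      assume "even (n div 2) \<longleftrightarrow> even (i + j + n + 1)"
      then show ?thesis
        unfolding even_monotonic_perm_maps_def using reversal_comp_shift_cycle_permutes[OF i j'] evenperm_reversal_comp_shift_cycle[OF i j']
          monotonic_on_reversal_comp_shift_cycle[OF i j'] maps_i_to_j parity
        by (intro exI[of _ "reversal n \<circ> shift_cycle i (n + 1 - j)"]) simp
    qed
  qed
qed

section \<open>The monoid AM n\<close>

definition restr :: "(nat \<Rightarrow> nat) \<Rightarrow> nat set \<Rightarrow> nat \<Rightarrow> nat option" where
  "restr f A = (\<lambda>x. if x \<in> A then Some (f x) else None)"

lemma restr_apply [simp]: "x \<in> A \<Longrightarrow> restr f A x = Some (f x)"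
  by (simp add: restr_def)

lemma dom_restr [simp]: "dom (restr f A) = A"
  by (auto simp: restr_def dom_def)

lemma ran_restr: "ran (restr f A) = f ` A"
  by (auto simp: ran_def restr_def split: if_splits)

lemma restr_cong: "A = B \<Longrightarrow> (\<And>x. x \<in> A \<Longrightarrow> f x = g x) \<Longrightarrow> restr f A = restr g B"
  by (auto simp: restr_def fun_eq_iff)

lemma restr_dom_eq: "(\<And>x. x \<in> dom f \<Longrightarrow> f x = Some (g x)) \<Longrightarrow> restr g (dom f) = f"
  by (auto simp: restr_def fun_eq_iff dom_def)

lemma pcomp_restr: "pcomp (restr f A) (restr g B) = restr (g \<circ> f) {x \<in> A. f x \<in> B}"
  by (auto simp: pcomp_def restr_def fun_eq_iff map_comp_def)

lemma pcomp_assoc: "pcomp (pcomp a b) c = pcomp a (pcomp b c)"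
  by (auto simp: pcomp_def fun_eq_iff map_comp_def split: option.split)

lemma order_preserving_p_restr: "order_preserving_p (restr s A) \<longleftrightarrow> mono_on A s"
  by (auto simp: order_preserving_p_def monotone_on_def)

lemma order_reversing_p_restr: "order_reversing_p (restr s A) \<longleftrightarrow> antimono_on A s"
  by (auto simp: order_reversing_p_def monotone_on_def)

lemma restr_in_PI: "A \<subseteq> {1..n} \<Longrightarrow> s permutes {1..n} \<Longrightarrow> restr s A \<in> PI n"
proof -
  assume A: "A \<subseteq> {1..n}" and s: "s permutes {1..n}"
  have "ran (restr s A) \<subseteq> {1..n}"
    using A permutes_in_image[OF s] by (auto simp: ran_restr)
  moreover have "inj_on (restr s A) A"
    using permutes_inj[OF s] by (auto simp: inj_on_def dest: injD)
  ultimately show ?thesis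
    using A unfolding PI_def Omega_def by simp
qed

lemma AM_iff:
  "f \<in> AM n \<longleftrightarrow>
     (\<exists>s A. A \<subseteq> {1..n} \<and> s permutes {1..n} \<and> evenperm s \<and> monotonic_on A s \<and> f = restr s A)"
proof
  assume f: "f \<in> AM n"
  then obtain s where s: "s permutes {1..n}" "evenperm s" "\<forall>x \<in> dom f. f x = Some (s x)"
    unfolding AM_def AI_def Omega_def by blast
  have f_eq: "f = restr s (dom f)"
    using s(3) by (simp add: restr_dom_eq)
  have "dom f \<subseteq> {1..n}" using f unfolding AM_def AI_def PI_def Omega_def by blast
  moreover have "order_preserving_p (restr s (dom f)) \<or> order_reversing_p (restr s (dom f))"
    using f f_eq[symmetric] unfolding AM_def PMI_def by simp
  then have "monotonic_on (dom f) s"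
    by (simp add: monotonic_on_def order_preserving_p_restr order_reversing_p_restr)
  ultimately show "\<exists>s A. A \<subseteq> {1..n} \<and> s permutes {1..n} \<and> evenperm s \<and> monotonic_on A s \<and> f = restr s A"
    using s f_eq by blast
next
  assume "\<exists>s A. A \<subseteq> {1..n} \<and> s permutes {1..n} \<and> evenperm s \<and> monotonic_on A s \<and> f = restr s A"
  then obtain s A where A: "A \<subseteq> {1..n}" and s: "s permutes {1..n}" "evenperm s"
    and mono: "monotonic_on A s" and f_eq: "f = restr s A"
    by blast
  have "restr s A \<in> PI n" using A s(1) by (rule restr_in_PI)
  moreover have "\<forall>x \<in> dom (restr s A). restr s A x = Some (s x)" by simp
  moreover have "order_preserving_p (restr s A) \<or> order_reversing_p (restr s A)"
    using mono by (simp add: monotonic_on_def order_preserving_p_restr order_reversing_p_restr)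
  ultimately show "f \<in> AM n"
    unfolding AM_def AI_def PMI_def Omega_def f_eq using s by blast
qed

lemma restr_in_AM:
  "A \<subseteq> {1..n} \<Longrightarrow> s permutes {1..n} \<Longrightarrow> evenperm s \<Longrightarrow> monotonic_on A s \<Longrightarrow> restr s A \<in> AM n"
  using AM_iff by blast

lemma restr_id_in_AM: "A \<subseteq> {1..n} \<Longrightarrow> restr id A \<in> AM n"
  by (rule restr_in_AM) (auto simp: monotonic_on_def monotone_on_def)

lemma restr_inv_in_AM:
  assumes "A \<subseteq> {1..n}" "s permutes {1..n}" "evenperm s" "monotonic_on A s"
  shows "restr (inv s) (s ` A) \<in> AM n"
proof (rule restr_in_AM)
  show "s ` A \<subseteq> {1..n}" using assms(1) permutes_in_image[OF assms(2)] by blast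
  show "inv s permutes {1..n}" using permutes_inv[OF assms(2)] .
  show "evenperm (inv s)"
    using assms(2,3) evenperm_inv permutes_imp_permutation[OF finite_atLeastAtMost] by blast
  show "monotonic_on (s ` A) (inv s)"
    using monotonic_on_inv[OF permutes_inj[OF assms(2)] assms(4)] .
qed

lemma pcomp_in_AM:
  assumes "a \<in> AM n" "b \<in> AM n"
  shows "pcomp a b \<in> AM n"
proof -
  obtain s A where a: "A \<subseteq> {1..n}" "s permutes {1..n}" "evenperm s" "monotonic_on A s" "a = restr s A"
    using assms(1) AM_iff by blast
  obtain t B where b: "t permutes {1..n}" "evenperm t" "monotonic_on B t" "b = restr t B"
    using assms(2) AM_iff by blast
  let ?C = "{x \<in> A. s x \<in> B}"
  have "monotonic_on ?C (t \<circ> s)"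
    by (rule monotonic_on_comp; rule monotonic_on_subset[OF a(4)] monotonic_on_subset[OF b(3)]) auto
  moreover have "evenperm (t \<circ> s)"
    using a(2,3) b(1,2) by (simp add: evenperm_comp permutes_imp_permutation[OF finite_atLeastAtMost])
  ultimately have "restr (t \<circ> s) ?C \<in> AM n"
    using a(1) permutes_compose[OF a(2) b(1)] by (intro restr_in_AM) auto
  then show ?thesis using a(5) b(4) by (simp add: pcomp_restr)
qed

section \<open>Green's relation J on elements of rank n - 1\<close>

lemma ideal2I: "s \<in> M \<Longrightarrow> t \<in> M \<Longrightarrow> a = pcomp (pcomp s b) t \<Longrightarrow> a \<in> ideal2 M b"
  unfolding ideal2_def by blast

lemma ideal2_subset:
  assumes closed: "\<And>a b. a \<in> M \<Longrightarrow> b \<in> M \<Longrightarrow> pcomp a b \<in> M" and "a \<in> ideal2 M b"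
  shows "ideal2 M a \<subseteq> ideal2 M b"
proof
  fix x assume "x \<in> ideal2 M a"
  then obtain u v where uv: "u \<in> M" "v \<in> M" "x = pcomp (pcomp u a) v"
    unfolding ideal2_def by blast
  obtain s t where st: "s \<in> M" "t \<in> M" "a = pcomp (pcomp s b) t"
    using \<open>a \<in> ideal2 M b\<close> unfolding ideal2_def by blast
  have "x = pcomp (pcomp (pcomp u s) b) (pcomp t v)"
    using uv(3) st(3) by (simp add: pcomp_assoc)
  then show "x \<in> ideal2 M b"
    using closed uv st by (intro ideal2I) auto
qed

lemma greenJ_AM_intro:
  "a \<in> ideal2 (AM n) b \<Longrightarrow> b \<in> ideal2 (AM n) a \<Longrightarrow> greenJ (AM n) a b"
  unfolding greenJ_def using ideal2_subset[OF pcomp_in_AM] by blast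

lemma greenJ_AM_restr_id:
  assumes A: "A \<subseteq> {1..n}" and s: "s permutes {1..n}" "evenperm s" "monotonic_on A s"
  shows "greenJ (AM n) (restr s A) (restr id A)"
    and "greenJ (AM n) (restr s A) (restr id (s ` A))"
proof -
  have sA: "s ` A \<subseteq> {1..n}" using A permutes_in_image[OF s(1)] by blast
  have inj: "inj s" using permutes_inj[OF s(1)] .
  have I: "restr id {1..n} \<in> AM n" by (rule restr_id_in_AM) simp
  have a: "restr s A \<in> AM n" using A s by (rule restr_in_AM)
  have a': "restr (inv s) (s ` A) \<in> AM n" using A s by (rule restr_inv_in_AM)
  show "greenJ (AM n) (restr s A) (restr id A)"
  proof (rule greenJ_AM_intro)
    show "restr s A \<in> ideal2 (AM n) (restr id A)"
      by (rule ideal2I[OF I a]) (use A in \<open>auto simp: pcomp_restr intro!: restr_cong\<close>)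
    show "restr id A \<in> ideal2 (AM n) (restr s A)"
      by (rule ideal2I[OF I a']) (use A inj in \<open>auto simp: pcomp_restr intro!: restr_cong\<close>)
  qed
  show "greenJ (AM n) (restr s A) (restr id (s ` A))"
  proof (rule greenJ_AM_intro)
    show "restr s A \<in> ideal2 (AM n) (restr id (s ` A))"
      by (rule ideal2I[OF a I]) (use A sA in \<open>auto simp: pcomp_restr intro!: restr_cong\<close>)
    show "restr id (s ` A) \<in> ideal2 (AM n) (restr s A)"
      by (rule ideal2I[OF a' I])
        (use sA inj in \<open>auto simp: pcomp_restr surj_f_inv_f permutes_surj[OF s(1)] intro!: restr_cong\<close>)
  qed
qed

lemma restr_id_in_ideal2_AM:
  assumes "restr id A \<in> ideal2 (AM n) (restr id B)"
  obtains s where "s permutes {1..n}" "evenperm s" "monotonic_on A s" "s ` A \<subseteq> B"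
proof -
  obtain u v where uv: "u \<in> AM n" "v \<in> AM n" "restr id A = pcomp (pcomp u (restr id B)) v"
    using assms unfolding ideal2_def by blast
  obtain s S where s: "s permutes {1..n}" "evenperm s" "monotonic_on S s" "u = restr s S"
    using uv(1) AM_iff by blast
  obtain t T where v: "v = restr t T"
    using uv(2) AM_iff by blast
  have "A = {x \<in> {x \<in> S. s x \<in> B}. s x \<in> T}"
    using arg_cong[OF uv(3), of dom] unfolding s(4) v pcomp_restr by simp
  then have "A \<subseteq> S" "s ` A \<subseteq> B" by auto
  then show ?thesis using that s monotonic_on_subset by blast
qed

lemma greenJ_AM_restr_id_Diff_iff:
  assumes a: "a \<in> {1..n}" and b: "b \<in> {1..n}"
  shows "greenJ (AM n) (restr id ({1..n} - {a})) (restr id ({1..n} - {b}))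
    \<longleftrightarrow> even_monotonic_perm_maps n a b"
proof
  let ?ida = "restr id ({1..n} - {a})"
  assume J: "greenJ (AM n) ?ida (restr id ({1..n} - {b}))"
  have I: "restr id {1..n} \<in> AM n" by (rule restr_id_in_AM) simp
  have "?ida \<in> ideal2 (AM n) ?ida"
    by (rule ideal2I[OF I I]) (auto simp: pcomp_restr intro!: restr_cong)
  then have "?ida \<in> ideal2 (AM n) (restr id ({1..n} - {b}))"
    using J unfolding greenJ_def by simp
  then obtain s where s: "s permutes {1..n}" "evenperm s" "monotonic_on ({1..n} - {a}) s"
    and into: "s ` ({1..n} - {a}) \<subseteq> {1..n} - {b}"
    by (rule restr_id_in_ideal2_AM)
  have "{1..n} - {s a} \<subseteq> {1..n} - {b}"
    using into unfolding permutes_image_Diff_singleton[OF s(1)] .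
  then have "s a = b" using b by blast
  then show "even_monotonic_perm_maps n a b"
    unfolding even_monotonic_perm_maps_def using s by blast
next
  assume "even_monotonic_perm_maps n a b"
  then obtain s where s: "s permutes {1..n}" "evenperm s" "s a = b" "monotonic_on ({1..n} - {a}) s"
    unfolding even_monotonic_perm_maps_def by blast
  have "s ` ({1..n} - {a}) = {1..n} - {b}"
    using permutes_image_Diff_singleton[OF s(1)] s(3) by simp
  then show "greenJ (AM n) (restr id ({1..n} - {a})) (restr id ({1..n} - {b}))"
    using greenJ_AM_restr_id[of "{1..n} - {a}" n s] s unfolding greenJ_def by auto
qed

lemma AM_rank_pred_greenJ:
  assumes f: "f \<in> AM n" and rank: "rank f = n - 1" and "n \<ge> 1"
  shows "dpt n f \<in> {1..n}" and "greenJ (AM n) f (restr id ({1..n} - {dpt n f}))"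
proof -
  obtain s A where A: "A \<subseteq> {1..n}" and s: "s permutes {1..n}" "evenperm s" "monotonic_on A s"
    and f_eq: "f = restr s A"
    using f AM_iff by blast
  have "card A = n - 1"
    using rank permutes_inj[OF s(1)]
    unfolding rank_def f_eq ran_restr by (simp add: card_image inj_on_subset)
  then have "A \<noteq> {1..n}" using \<open>n \<ge> 1\<close> by auto
  then obtain d where d: "d \<in> {1..n}" "d \<notin> A" using A by blast
  have "A = {1..n} - {d}"
    using A d \<open>card A = n - 1\<close> by (intro card_subset_eq) auto
  moreover have "dpt n f = d"
    unfolding dpt_def Omega_def f_eq dom_restr \<open>A = {1..n} - {d}\<close>
    by (rule the_equality) (use d(1) in auto)
  ultimately show "dpt n f \<in> {1..n}" "greenJ (AM n) f (restr id ({1..n} - {dpt n f}))"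
    using d(1) greenJ_AM_restr_id(1)[OF A s] f_eq by simp_all
qed

theorem proposition2p5:
  fixes n :: nat and \<alpha> \<beta> :: "nat \<Rightarrow> nat option"
  assumes "n \<ge> 2"
    and "\<alpha> \<in> AM n" and "\<beta> \<in> AM n"
    and "rank \<alpha> = n - 1" and "rank \<beta> = n - 1"
  shows "(n mod 4 = 0 \<or> n mod 4 = 3 \<longrightarrow> greenJ (AM n) \<alpha> \<beta>)
       \<and> (n mod 4 = 1 \<or> n mod 4 = 2 \<longrightarrow>
            (greenJ (AM n) \<alpha> \<beta> \<longleftrightarrow> (even (dpt n \<alpha>) \<longleftrightarrow> even (dpt n \<beta>))))"
proof -
  have n: "n \<ge> 1" using assms(1) by simp
  note \<alpha> = AM_rank_pred_greenJ[OF assms(2,4) n] and \<beta> = AM_rank_pred_greenJ[OF assms(3,5) n]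
  have "greenJ (AM n) \<alpha> \<beta> \<longleftrightarrow>
      greenJ (AM n) (restr id ({1..n} - {dpt n \<alpha>})) (restr id ({1..n} - {dpt n \<beta>}))"
    using \<alpha>(2) \<beta>(2) unfolding greenJ_def by simp
  also have "\<dots> \<longleftrightarrow> even_monotonic_perm_maps n (dpt n \<alpha>) (dpt n \<beta>)"
    using \<alpha>(1) \<beta>(1) by (rule greenJ_AM_restr_id_Diff_iff)
  also have "\<dots> \<longleftrightarrow> even (dpt n \<alpha> + dpt n \<beta>) \<or>
      (even (n div 2) \<longleftrightarrow> even (dpt n \<alpha> + dpt n \<beta> + n + 1))"
    using \<alpha>(1) \<beta>(1) by (rule even_monotonic_perm_maps_iff)
  finally show ?thesis by presburger
qed

end
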